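(* Let $T$ be dependent, $\kappa$ regular $>|T|$, $N\prec\mathfrak C$ $\kappa$-saturated and $q\in\mathbf S^{\mathrm{nsp},m}_{\ge\kappa}(N)$ for some $m<\omega$. Then for every $M\prec N$ with $\|M\|<\kappa$ and every formula $\varphi(\bar x,\bar y)$ with parameters from $N$, where $\ell g(\bar x)=m$ and $\bar y$ is finite, there are a formula $\psi(\bar x,\bar d)\in q$ and a function $\eta:{}^{\ell g(\bar y)}M\to\{0,1\}$ such that $$\psi(\bar x,\bar d)\vdash\{\varphi(\bar x,\bar b)^{\eta(\bar b)}:\bar b\in{}^{\ell g(\bar y)}M\}$$ (hence this set is included in $q$).
   Context: $T$ is a complete first-order theory, $\mathfrak C$ its monster model; types are computed in $\mathfrak C$. $T$ dependent means NIP. $\varphi^1=\varphi$, $\varphi^0=\neg\varphi$. A type $p$ does not split over $B$ if whenever $\varphi(\bar x,\bar b),\neg\varphi(\bar x,\bar c)\in p$ then $\mathrm{tp}(\bar b,B)\ne\mathrm{tp}(\bar c,B)$. Complete types $p(\bar x),q(\bar y)$ over $A$ are weakly orthogonal if for all $\bar a_1,\bar a_2$ realizing $p$ and $\bar b_1,\bar b_2$ realizing $q$, $\mathrm{tp}(\bar a_1{}^\frown\bar b_1,A)=\mathrm{tp}(\bar a_2{}^\frown\bar b_2,A)$. $\mathbf S^{\mathrm{nsp}}_{<\kappa}(A)$ is the set of complete types (in finitely many variables) over $A$ that do not split over some $B\subseteq A$ with $|B|<\kappa$; $\mathbf S^{\mathrm{nsp},m}_{\ge\kappa}(A)$ is the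 set of $p\in\mathbf S^m(A)$ weakly orthogonal to every $r\in\mathbf S^{\mathrm{nsp}}_{<\kappa}(A)$. *)

theory Defs
  imports Main
begin

datatype 'f trm = Var nat | Fn 'f "'f trm list"

datatype ('f,'r) fm =
    Eq "'f trm" "'f trm"
  | Rel 'r "'f trm list"
  | Neg "('f,'r) fm"
  | Conj "('f,'r) fm" "('f,'r) fm"
  | Ex nat "('f,'r) fm"

record ('f,'r,'a) struc =
  dom :: "'a set"
  fa  :: "'f \<Rightarrow> nat"
  ra  :: "'r \<Rightarrow> nat"
  fn  :: "'f \<Rightarrow> 'a list \<Rightarrow> 'a"
  rl  :: "'r \<Rightarrow> 'a list \<Rightarrow> bool"

fun wf_trm :: "('f \<Rightarrow> nat) \<Rightarrow> 'f trm \<Rightarrow> bool" where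
  "wf_trm ar (Var i) = True"
| "wf_trm ar (Fn f ts) = (length ts = ar f \<and> (\<forall>t\<in>set ts. wf_trm ar t))"

fun wf_fm :: "('f \<Rightarrow> nat) \<Rightarrow> ('r \<Rightarrow> nat) \<Rightarrow> ('f,'r) fm \<Rightarrow> bool" where
  "wf_fm af ar (Eq t u) = (wf_trm af t \<and> wf_trm af u)"
| "wf_fm af ar (Rel r ts) = (length ts = ar r \<and> (\<forall>t\<in>set ts. wf_trm af t))"
| "wf_fm af ar (Neg \<phi>) = wf_fm af ar \<phi>"
| "wf_fm af ar (Conj \<phi> \<psi>) = (wf_fm af ar \<phi> \<and> wf_fm af ar \<psi>)"
| "wf_fm af ar (Ex i \<phi>) = wf_fm af ar \<phi>"

definition wf :: "('f,'r,'a) struc \<Rightarrow> ('f,'r) fm \<Rightarrow> bool" where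
  "wf C \<phi> = wf_fm (fa C) (ra C) \<phi>"

fun fvt :: "'f trm \<Rightarrow> nat set" where
  "fvt (Var i) = {i}"
| "fvt (Fn f ts) = (\<Union>t\<in>set ts. fvt t)"

fun fv :: "('f,'r) fm \<Rightarrow> nat set" where
  "fv (Eq t u) = fvt t \<union> fvt u"
| "fv (Rel r ts) = (\<Union>t\<in>set ts. fvt t)"
| "fv (Neg \<phi>) = fv \<phi>"
| "fv (Conj \<phi> \<psi>) = fv \<phi> \<union> fv \<psi>"
| "fv (Ex i \<phi>) = fv \<phi> - {i}"

fun evalt :: "('f \<Rightarrow> 'a list \<Rightarrow> 'a) \<Rightarrow> (nat \<Rightarrow> 'a) \<Rightarrow> 'f trm \<Rightarrow> 'a" where
  "evalt F v (Var i) = v i"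
| "evalt F v (Fn f ts) = F f (map (evalt F v) ts)"

fun sat :: "('f,'r,'a) struc \<Rightarrow> (nat \<Rightarrow> 'a) \<Rightarrow> ('f,'r) fm \<Rightarrow> bool" where
  "sat S v (Eq t u) = (evalt (fn S) v t = evalt (fn S) v u)"
| "sat S v (Rel r ts) = rl S r (map (evalt (fn S) v) ts)"
| "sat S v (Neg \<phi>) = (\<not> sat S v \<phi>)"
| "sat S v (Conj \<phi> \<psi>) = (sat S v \<phi> \<and> sat S v \<psi>)"
| "sat S v (Ex i \<phi>) = (\<exists>a\<in>dom S. sat S (v(i := a)) \<phi>)"

definition struct :: "('f,'r,'a) struc \<Rightarrow> bool" where
  "struct C \<longleftrightarrow> dom C \<noteq> {} \<and>
     (\<forall>f as. length as = fa C f \<and> set as \<subseteq> dom C \<longrightarrow> fn C f as \<in> dom C)"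

definition restr :: "('f,'r,'a) struc \<Rightarrow> 'a set \<Rightarrow> ('f,'r,'a) struc" where
  "restr C A = C\<lparr>dom := A\<rparr>"

definition elem_sub :: "('f,'r,'a) struc \<Rightarrow> 'a set \<Rightarrow> bool" where
  "elem_sub C A \<longleftrightarrow> A \<noteq> {} \<and> A \<subseteq> dom C \<and>
     (\<forall>f as. length as = fa C f \<and> set as \<subseteq> A \<longrightarrow> fn C f as \<in> A) \<and>
     (\<forall>\<phi> v. wf C \<phi> \<and> (\<forall>i. v i \<in> A) \<longrightarrow> (sat (restr C A) v \<phi> \<longleftrightarrow> sat C v \<phi>))"

definition asg :: "'a list \<Rightarrow> (nat \<Rightarrow> 'a) \<Rightarrow> nat \<Rightarrow> 'a" where
  "asg xs w i = (if i < length xs then xs ! i else w i)"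

definition shift_asg :: "nat \<Rightarrow> 'a list \<Rightarrow> (nat \<Rightarrow> 'a) \<Rightarrow> nat \<Rightarrow> 'a" where
  "shift_asg m b w i = (if m \<le> i \<and> i < m + length b then b ! (i - m) else w i)"

text \<open>A formula over A in the variables x_0..x_{n-1} is a pair (phi, w) where
  w assigns parameters from A to all other variables.  A type in n variables
  is tagged with n.\<close>
definition tp :: "('f,'r,'a) struc \<Rightarrow> 'a set \<Rightarrow> 'a list
                   \<Rightarrow> nat \<times> (('f,'r) fm \<times> (nat \<Rightarrow> 'a)) set" where
  "tp C A xs = (length xs, {(\<phi>, w). wf C \<phi> \<and> (\<forall>i. w i \<in> A) \<and> sat C (asg xs w) \<phi>})"

definition Stypes :: "('f,'r,'a) struc \<Rightarrow> 'a set \<Rightarrow> nat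
                   \<Rightarrow> (nat \<times> (('f,'r) fm \<times> (nat \<Rightarrow> 'a)) set) set" where
  "Stypes C A n = {tp C A xs | xs. length xs = n \<and> set xs \<subseteq> dom C}"

definition realizes :: "('f,'r,'a) struc \<Rightarrow> 'a set \<Rightarrow> 'a list
                   \<Rightarrow> nat \<times> (('f,'r) fm \<times> (nat \<Rightarrow> 'a)) set \<Rightarrow> bool" where
  "realizes C A xs p \<longleftrightarrow> set xs \<subseteq> dom C \<and> tp C A xs = p"

definition weakly_orth where
  "weakly_orth C A p r \<longleftrightarrow>
     (\<forall>a1 a2 b1 b2. realizes C A a1 p \<and> realizes C A a2 p \<and>
        realizes C A b1 r \<and> realizes C A b2 r \<longrightarrow>
        tp C A (a1 @ b1) = tp C A (a2 @ b2))"

definition nonsplit where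
  "nonsplit C A B p \<longleftrightarrow>
     (\<forall>\<phi> k b c w. wf C \<phi> \<and> fv \<phi> \<subseteq> {..<fst p + k} \<and>
        length b = k \<and> length c = k \<and> set b \<subseteq> A \<and> set c \<subseteq> A \<and> (\<forall>i. w i \<in> A) \<and>
        (\<phi>, shift_asg (fst p) b w) \<in> snd p \<and> (Neg \<phi>, shift_asg (fst p) c w) \<in> snd p
        \<longrightarrow> tp C B b \<noteq> tp C B c)"

abbreviation card_lt :: "'a set \<Rightarrow> 'k rel \<Rightarrow> bool" where
  "card_lt A \<kappa> \<equiv> ordLess2 (card_of A) \<kappa>"

definition Snsp_lt where
  "Snsp_lt C A \<kappa> = {p. \<exists>n. p \<in> Stypes C A n \<and> (\<exists>B\<subseteq>A. card_lt B \<kappa> \<and> nonsplit C A B p)}"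

definition Snsp_ge where
  "Snsp_ge C A \<kappa> m = {p \<in> Stypes C A m. \<forall>r\<in>Snsp_lt C A \<kappa>. weakly_orth C A p r}"

definition saturated :: "('f,'r,'a) struc \<Rightarrow> 'k rel \<Rightarrow> bool" where
  "saturated C lam \<longleftrightarrow>
     (\<forall>A P. A \<subseteq> dom C \<and> card_lt A lam \<and>
        (\<forall>(\<phi>, w)\<in>P. wf C \<phi> \<and> (\<forall>i. w i \<in> A)) \<and>
        (\<forall>F\<subseteq>P. finite F \<longrightarrow> (\<exists>c\<in>dom C. \<forall>(\<phi>, w)\<in>F. sat C (asg [c] w) \<phi>))
        \<longrightarrow> (\<exists>c\<in>dom C. \<forall>(\<phi>, w)\<in>P. sat C (asg [c] w) \<phi>))"

definition ksaturated :: "('f,'r,'a) struc \<Rightarrow> 'a set \<Rightarrow> 'k rel \<Rightarrow> bool" where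
  "ksaturated C N \<kappa> \<longleftrightarrow>
     (\<forall>A. A \<subseteq> N \<and> card_lt A \<kappa> \<longrightarrow> (\<forall>c\<in>dom C. \<exists>a\<in>N. tp C A [a] = tp C A [c]))"

definition NIP :: "('f,'r,'a) struc \<Rightarrow> bool" where
  "NIP C \<longleftrightarrow> \<not> (\<exists>\<phi> n k (a :: nat \<Rightarrow> 'a list) (b :: nat set \<Rightarrow> 'a list) w.
       wf C \<phi> \<and> fv \<phi> \<subseteq> {..<n + k} \<and> (\<forall>i. w i \<in> dom C) \<and>
       (\<forall>i. length (a i) = n \<and> set (a i) \<subseteq> dom C) \<and>
       (\<forall>I. length (b I) = k \<and> set (b I) \<subseteq> dom C) \<and>
       (\<forall>i I. sat C (asg (a i @ b I) w) \<phi> \<longleftrightarrow> i \<in> I))"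

end

theory Submission
  imports Defs
begin

text \<open>Let q = tp(a0/N) and call b in M^k bad for a formula psi of q if some realization a of psi
  disagrees with a0 on phi(x, b). If every psi in q had bad tuples, these sets of bad tuples would
  form a filter base on M^k, since q is closed under conjunction. A limit d of this filter base,
  realized by compactness (which saturation of C over N provides), has a type over N that is
  finitely satisfiable in M, hence does not split over M; so q is weakly orthogonal to tp(d/N).
  Weak orthogonality and compactness then yield psi in q and chi in tp(d/N) such that phi(a, e)
  takes the same value for all realizations a of psi and e of chi. A bad tuple e of psi satisfying
  chi contradicts this.\<close>

section \<open>Renaming variables\<close>

fun rent :: "(nat \<Rightarrow> nat) \<Rightarrow> 'f trm \<Rightarrow> 'f trm" where
  "rent s (Var i) = Var (s i)"
| "rent s (Fn f ts) = Fn f (map (rent s) ts)"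

fun ren :: "(nat \<Rightarrow> nat) \<Rightarrow> ('f,'r) fm \<Rightarrow> ('f,'r) fm" where
  "ren s (Eq t u) = Eq (rent s t) (rent s u)"
| "ren s (Rel r ts) = Rel r (map (rent s) ts)"
| "ren s (Neg p) = Neg (ren s p)"
| "ren s (Conj p1 p2) = Conj (ren s p1) (ren s p2)"
| "ren s (Ex i p) = Ex (s i) (ren s p)"

lemma evalt_rent: "evalt F v (rent s t) = evalt F (v \<circ> s) t"
  by (induction t) (auto cong: map_cong)

lemma sat_ren:
  assumes "inj s"
  shows "sat S v (ren s p) = sat S (v \<circ> s) p"
proof (induction p arbitrary: v)
  case (Ex i p)
  have upd: "(v(s i := a)) \<circ> s = (v \<circ> s)(i := a)" for a
    using assms by (auto simp: fun_eq_iff inj_eq)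
  show ?case by (simp only: ren.simps sat.simps Ex.IH upd)
qed (simp_all add: evalt_rent comp_def)

lemma wf_ren: "wf C (ren s p) = wf C p"
proof -
  have "wf_trm ar (rent s t) = wf_trm ar t" for ar and t :: "'f trm"
    by (induction t) auto
  then show ?thesis unfolding wf_def by (induction p) auto
qed

lemma evalt_cong: "(\<And>i. i \<in> fvt t \<Longrightarrow> v i = v' i) \<Longrightarrow> evalt F v t = evalt F v' t"
proof (induction t)
  case (Fn f ts)
  then have "map (evalt F v) ts = map (evalt F v') ts" by (auto intro!: map_cong)
  then show ?case by (simp del: map_eq_conv)
qed simp

lemma sat_cong: "(\<And>i. i \<in> fv p \<Longrightarrow> v i = v' i) \<Longrightarrow> sat S v p = sat S v' p"
proof (induction p arbitrary: v v')
  case (Eq t u)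
  have "evalt (fn S) v t = evalt (fn S) v' t" "evalt (fn S) v u = evalt (fn S) v' u"
    using Eq.prems by (auto intro: evalt_cong[where v=v and v'=v'])
  then show ?case by simp
next
  case (Rel r ts)
  have "map (evalt (fn S) v) ts = map (evalt (fn S) v') ts"
  proof (rule map_cong)
    fix t assume "t \<in> set ts"
    then show "evalt (fn S) v t = evalt (fn S) v' t"
      using Rel.prems by (intro evalt_cong) auto
  qed simp
  then show ?case by (simp del: map_eq_conv)
next
  case (Ex i p)
  have "sat S (v(i:=a)) p = sat S (v'(i:=a)) p" for a
  proof (rule Ex.IH)
    fix j assume "j \<in> fv p" then show "(v(i:=a)) j = (v'(i:=a)) j"
      using Ex.prems by (cases "j = i") auto
  qed
  then show ?case by simp
next
  case (Neg p)
  have "sat S v p = sat S v' p" by (rule Neg.IH) (use Neg.prems in simp)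
  then show ?case by simp
next
  case (Conj p1 p2)
  have "sat S v p1 = sat S v' p1" by (rule Conj.IH(1)) (use Conj.prems in simp)
  moreover have "sat S v p2 = sat S v' p2" by (rule Conj.IH(2)) (use Conj.prems in simp)
  ultimately show ?case by simp
qed

lemma finite_fv: "finite (fv p)"
proof -
  have "finite (fvt t)" for t :: "'f trm" by (induction t) auto
  then show ?thesis by (induction p) auto
qed

lemma asg_append_last: "length ys = n \<Longrightarrow> (asg ys u)(n := c) = asg (ys @ [c]) u"
  by (auto simp: asg_def fun_eq_iff nth_append)

lemma asg_shift_asg: "length a = m \<Longrightarrow> asg a (shift_asg m b w) = asg (a @ b) w"
  by (auto simp: asg_def shift_asg_def fun_eq_iff nth_append)

definition ren_gap :: "nat \<Rightarrow> nat \<Rightarrow> nat \<Rightarrow> nat" where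
  "ren_gap m k i = (if i < m then i else i + k)"

definition par_gap :: "nat \<Rightarrow> nat \<Rightarrow> (nat \<Rightarrow> 'a) \<Rightarrow> nat \<Rightarrow> 'a" where
  "par_gap m k u j = (if m + k \<le> j then u (j - k) else u j)"

lemma inj_ren_gap: "inj (ren_gap m k)"
  by (rule injI) (auto simp: ren_gap_def split: if_splits)

lemma par_gap_in: "\<forall>i. u i \<in> A \<Longrightarrow> par_gap m k u i \<in> A"
  by (simp add: par_gap_def)

lemma sat_insert_block:
  assumes "length a = m" "length e = k"
  shows "sat C (asg (a @ e @ f) (par_gap m k u)) (ren (ren_gap m k) p) = sat C (asg (a @ f) u) p"
proof -
  have "asg (a @ e @ f) (par_gap m k u) \<circ> ren_gap m k = asg (a @ f) u"
    using assms by (auto simp: fun_eq_iff asg_def par_gap_def ren_gap_def nth_append)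
  then show ?thesis by (simp add: sat_ren[OF inj_ren_gap])
qed

definition block_swap :: "nat \<Rightarrow> nat \<Rightarrow> nat \<Rightarrow> nat" where
  "block_swap k k' i = (if i < k then i + k' else if i < k + k' then i - k else i)"

definition prefix_par :: "'a list \<Rightarrow> nat \<Rightarrow> (nat \<Rightarrow> 'a) \<Rightarrow> nat \<Rightarrow> 'a" where
  "prefix_par e k' u j = (if k' \<le> j \<and> j < k' + length e then e ! (j - k') else u j)"

lemma prefix_par_in: "set e \<subseteq> A \<Longrightarrow> \<forall>i. u i \<in> A \<Longrightarrow> prefix_par e k' u i \<in> A"
  by (auto simp: prefix_par_def)

lemma sat_prefix_par:
  assumes "length z = k'"
  shows "sat C (asg z (prefix_par e k' u)) (ren (block_swap (length e) k') p) = sat C (asg (e @ z) u) p"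
proof -
  have "inj (block_swap (length e) k')"
    by (rule injI) (auto simp: block_swap_def split: if_splits)
  moreover have "asg z (prefix_par e k' u) \<circ> block_swap (length e) k' = asg (e @ z) u"
    using assms by (auto simp: fun_eq_iff asg_def prefix_par_def block_swap_def nth_append)
  ultimately show ?thesis by (simp add: sat_ren)
qed

lemma ex_conj_formula:
  assumes "wf C p1" "wf C p2" "\<forall>i. w1 i \<in> A" "\<forall>i. w2 i \<in> A"
  shows "\<exists>p w. wf C p \<and> (\<forall>i. w i \<in> A) \<and> (\<forall>xs. length xs = m \<longrightarrow>
           (sat C (asg xs w) p \<longleftrightarrow> sat C (asg xs w1) p1 \<and> sat C (asg xs w2) p2))"
proof -
  define K where "K = Suc (Max (insert 0 (fv p1)))"
  have K: "i \<in> fv p1 \<Longrightarrow> i < K" for i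
    unfolding K_def using finite_fv[of p1] by (simp add: le_imp_less_Suc)
  \<comment> \<open>the parameters of p2 are moved beyond those of p1 that p1 actually reads\<close>
  define w where "w = (\<lambda>i. if m + K \<le> i then w2 (i - K) else w1 i)"
  have "sat C (asg xs w) (Conj p1 (ren (ren_gap m K) p2)) \<longleftrightarrow>
      sat C (asg xs w1) p1 \<and> sat C (asg xs w2) p2" if "length xs = m" for xs
  proof -
    have "sat C (asg xs w) p1 = sat C (asg xs w1) p1"
      by (rule sat_cong) (auto dest!: K simp: asg_def w_def)
    moreover have "asg xs w \<circ> ren_gap m K = asg xs w2"
      using that by (auto simp: asg_def w_def ren_gap_def fun_eq_iff)
    ultimately show ?thesis by (simp add: sat_ren[OF inj_ren_gap])
  qed
  moreover have "wf C (Conj p1 (ren (ren_gap m K) p2))"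
    using assms wf_ren[of C _ p2] by (simp add: wf_def)
  moreover have "\<forall>i. w i \<in> A" using assms unfolding w_def by auto
  ultimately show ?thesis by blast
qed

lemma ex_conj_formula_set:
  assumes "finite G" "A \<noteq> {}" "\<forall>(p,w)\<in>G. wf C p \<and> (\<forall>i. w i \<in> A)"
  shows "\<exists>p w. wf C p \<and> (\<forall>i. w i \<in> A) \<and> (\<forall>xs. length xs = m \<longrightarrow>
           (sat C (asg xs w) p \<longleftrightarrow> (\<forall>(p',w')\<in>G. sat C (asg xs w') p')))"
  using assms(1,3)
proof (induction G rule: finite_induct)
  case empty
  obtain a where "a \<in> A" using assms(2) by blast
  then show ?case
    by (intro exI[of _ "Eq (Var 0) (Var 0)"] exI[of _ "\<lambda>_. a"]) (auto simp: wf_def)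
next
  case (insert g G)
  obtain p w where pw: "wf C p" "\<forall>i. w i \<in> A" "\<forall>xs. length xs = m \<longrightarrow>
      (sat C (asg xs w) p \<longleftrightarrow> (\<forall>(p',w')\<in>G. sat C (asg xs w') p'))"
    using insert by auto
  obtain p1 w1 where g: "g = (p1, w1)" by (cases g)
  then have "wf C p1" "\<forall>i. w1 i \<in> A" using insert.prems by auto
  from ex_conj_formula[OF this(1) pw(1) this(2) pw(2), of m] obtain p' w' where
    "wf C p'" "\<forall>i. w' i \<in> A" "\<forall>xs. length xs = m \<longrightarrow>
       (sat C (asg xs w') p' \<longleftrightarrow> sat C (asg xs w1) p1 \<and> sat C (asg xs w) p)" by blast
  then show ?case using pw(3) g by (intro exI[of _ p'] exI[of _ w']) auto
qed

section \<open>Compactness\<close>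

definition realized :: "('f,'r,'a) struc \<Rightarrow> nat \<Rightarrow> (('f,'r) fm \<times> (nat \<Rightarrow> 'a)) set \<Rightarrow> bool" where
  "realized C n P \<longleftrightarrow> (\<exists>xs. length xs = n \<and> set xs \<subseteq> dom C \<and> (\<forall>(p,w)\<in>P. sat C (asg xs w) p))"

definition finitely_realized :: "('f,'r,'a) struc \<Rightarrow> nat \<Rightarrow> (('f,'r) fm \<times> (nat \<Rightarrow> 'a)) set \<Rightarrow> bool" where
  "finitely_realized C n P \<longleftrightarrow> (\<forall>G\<subseteq>P. finite G \<longrightarrow> realized C n G)"

lemma realized_if_finite_dom:
  assumes "finite (dom C)" "finitely_realized C n P"
  shows "realized C n P"
proof (rule ccontr)
  assume not_realized: "\<not> realized C n P"
  define T where "T = {xs. set xs \<subseteq> dom C \<and> length xs = n}"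
  have "finite T" unfolding T_def using assms(1) by (rule finite_lists_length_eq)
  have "\<forall>xs\<in>T. \<exists>g\<in>P. \<not> sat C (asg xs (snd g)) (fst g)"
    using not_realized unfolding realized_def T_def by fastforce
  then obtain f where f: "\<forall>xs\<in>T. f xs \<in> P \<and> \<not> sat C (asg xs (snd (f xs))) (fst (f xs))"
    by metis
  then have "realized C n (f ` T)"
    using assms(2) \<open>finite T\<close> unfolding finitely_realized_def by blast
  then show False using f unfolding realized_def T_def by fastforce
qed

fun distinct_from_params :: "nat \<Rightarrow> ('f,'r) fm" where
  "distinct_from_params 0 = Eq (Var 0) (Var 0)"
| "distinct_from_params (Suc n) =
     Conj (Neg (Eq (Var 0) (Var (Suc n)))) (distinct_from_params n)"

lemma sat_distinct_from_params:
  "sat S v (distinct_from_params n) \<longleftrightarrow> (\<forall>j<n. v 0 \<noteq> v (Suc j))"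
  by (induction n) (auto simp: less_Suc_eq)

lemma dom_subset_if_finite_elem_sub:
  fixes C :: "('f,'r,'a) struc"
  assumes es: "elem_sub C N" and fin: "finite N"
  shows "dom C \<subseteq> N"
proof -
  obtain L where L: "set L = N" using finite_list[OF fin] by blast
  obtain n0 where n0: "n0 \<in> N" using es unfolding elem_sub_def by blast
  define w where "w = (\<lambda>j. case j of 0 \<Rightarrow> n0 | Suc k \<Rightarrow> if k < length L then L ! k else n0)"
  define outside :: "('f,'r) fm" where "outside = Ex 0 (distinct_from_params (length L))"
  have outside: "sat S w outside \<longleftrightarrow> (\<exists>a\<in>dom S. a \<notin> N)" for S :: "('f,'r,'a) struc"
  proof -
    have "(\<forall>j<length L. a \<noteq> w (Suc j)) \<longleftrightarrow> a \<notin> N" for a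
      using L by (auto simp: w_def in_set_conv_nth)
    then show ?thesis by (simp add: outside_def sat_distinct_from_params)
  qed
  have "wf C (distinct_from_params n)" for n
    unfolding wf_def by (induction n) auto
  then have "wf C outside" by (simp add: outside_def wf_def)
  moreover have "\<forall>i. w i \<in> N" using L n0 by (auto simp: w_def split: nat.split)
  ultimately have "sat (restr C N) w outside = sat C w outside"
    using es unfolding elem_sub_def by blast
  then show ?thesis using outside[of C] outside[of "restr C N"] by (auto simp: restr_def)
qed

lemma finite_subset_UN:
  assumes "finite A" "A \<subseteq> (\<Union>i\<in>I. B i)"
  obtains J where "J \<subseteq> I" "finite J" "A \<subseteq> (\<Union>i\<in>J. B i)"
proof -
  obtain FF where "finite FF" "FF \<subseteq> B ` I" "A \<subseteq> \<Union>FF"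
    using finite_subset_Union[OF assms] .
  with finite_subset_image[of FF B I] show thesis using that by blast
qed

context
  includes cardinal_syntax
begin

lemma card_lt_cardSuc_Un_finite:
  assumes "infinite N" "finite F"
  shows "card_lt (N \<union> F) (cardSuc |N| )"
proof -
  have "|F| \<le>o |N|"
    using finite_ordLess_infinite[of "|F|" "|N|"] assms
    by (simp add: Field_card_of card_of_well_order_on ordLess_imp_ordLeq)
  then have "|N \<union> F| \<le>o |N|"
    using card_of_Un_ordLeq_infinite_Field[OF _ ordLeq_refl[OF card_of_Card_order] _ card_of_Card_order]
      assms(1) by (simp add: Field_card_of)
  then show ?thesis
    using cardSuc_ordLeq_ordLess[OF card_of_Card_order card_of_Card_order] by blast
qed

end

text \<open>Saturation only realizes types in one variable. An n+1-type is realized one coordinate at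
  a time: the first n coordinates realize the existential projections of the finite conjunctions
  from P, and saturation over these n new parameters supplies the last one.\<close>

definition ex_closure ::
    "('f,'r,'a) struc \<Rightarrow> 'a set \<Rightarrow> nat \<Rightarrow> (('f,'r) fm \<times> (nat \<Rightarrow> 'a)) set
      \<Rightarrow> (('f,'r) fm \<times> (nat \<Rightarrow> 'a)) set" where
  "ex_closure C A n P = (\<Union>G\<in>{G. G \<subseteq> P \<and> finite G}.
     {(Ex n q, u) | q u. wf C q \<and> (\<forall>i. u i \<in> A) \<and>
        (\<forall>xs. length xs = Suc n \<longrightarrow> (\<forall>(p,w)\<in>G. sat C (asg xs w) p) \<longrightarrow> sat C (asg xs u) q)})"

lemma finitely_realized_ex_closure:
  assumes "finitely_realized C (Suc n) P"
  shows "finitely_realized C n (ex_closure C A n P)"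
  unfolding finitely_realized_def
proof (intro allI impI)
  fix H assume H: "H \<subseteq> ex_closure C A n P" "finite H"
  from H(2) H(1)[unfolded ex_closure_def] obtain GG where GG: "GG \<subseteq> {G. G \<subseteq> P \<and> finite G}" "finite GG"
      "H \<subseteq> (\<Union>G\<in>GG. {(Ex n q, u) | q u. wf C q \<and> (\<forall>i. u i \<in> A) \<and>
        (\<forall>xs. length xs = Suc n \<longrightarrow> (\<forall>(p,w)\<in>G. sat C (asg xs w) p) \<longrightarrow> sat C (asg xs u) q)})"
    by (rule finite_subset_UN)
  then have "\<Union>GG \<subseteq> P" "finite (\<Union>GG)" by auto
  then obtain xs where xs: "length xs = Suc n" "set xs \<subseteq> dom C"
      "\<forall>(p,w)\<in>\<Union>GG. sat C (asg xs w) p"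
    using assms unfolding finitely_realized_def realized_def by meson
  then obtain ys c where ys: "xs = ys @ [c]" "length ys = n"
    by (metis length_Suc_conv_rev)
  have "sat C (asg ys u) p" if pu: "(p,u) \<in> H" for p u
  proof -
    obtain G q where "G \<in> GG" "p = Ex n q" and implied: "\<forall>xs. length xs = Suc n \<longrightarrow>
        (\<forall>(p,w)\<in>G. sat C (asg xs w) p) \<longrightarrow> sat C (asg xs u) q"
      using GG(3) pu by blast
    moreover have "sat C (asg xs u) q" using implied xs \<open>G \<in> GG\<close> by blast
    ultimately show ?thesis using xs(2) ys by (auto simp: asg_append_last[symmetric])
  qed
  then show "realized C n H" using xs ys unfolding realized_def by auto
qed

lemma realized_append_if_ex_closure:
  fixes C :: "('f,'r,'a) struc"
  assumes satd: "saturated C (cardSuc (card_of N))" and N: "N \<subseteq> dom C" "infinite N"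
    and P: "\<forall>(p,w)\<in>P. wf C p \<and> (\<forall>i. w i \<in> N)"
    and ys: "length ys = n" "set ys \<subseteq> dom C" "\<forall>(p,w)\<in>ex_closure C N n P. sat C (asg ys w) p"
  shows "\<exists>c\<in>dom C. \<forall>(p,w)\<in>P. sat C (asg (ys @ [c]) w) p"
proof -
  define move :: "('f,'r) fm \<times> (nat \<Rightarrow> 'a) \<Rightarrow> ('f,'r) fm \<times> (nat \<Rightarrow> 'a)"
    where "move = (\<lambda>(p,w). (ren (block_swap n 1) p, prefix_par ys 1 w))"
  have sat_move:
    "sat C (asg [c] (prefix_par ys 1 w)) (ren (block_swap n 1) p) = sat C (asg (ys @ [c]) w) p"
    for c w p
    using sat_prefix_par[of "[c]" 1 C ys] ys(1) by simp
  have "\<exists>c\<in>dom C. \<forall>(p,w)\<in>move ` P. sat C (asg [c] w) p"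
  proof (rule satd[unfolded saturated_def, rule_format], intro conjI)
    show "N \<union> set ys \<subseteq> dom C" "card_lt (N \<union> set ys) (cardSuc (card_of N))"
      using N ys(2) card_lt_cardSuc_Un_finite by auto
    have "wf C (ren (block_swap n 1) p) \<and> (\<forall>i. prefix_par ys 1 w i \<in> N \<union> set ys)"
      if "(p,w) \<in> P" for p w
      using P that by (intro conjI allI prefix_par_in) (auto simp: wf_ren)
    then show "\<forall>(p,w)\<in>move ` P. wf C p \<and> (\<forall>i. w i \<in> N \<union> set ys)"
      by (auto simp: move_def)
    show "\<forall>H\<subseteq>move ` P. finite H \<longrightarrow> (\<exists>c\<in>dom C. \<forall>(p,w)\<in>H. sat C (asg [c] w) p)"
    proof (intro allI impI)
      fix H assume "H \<subseteq> move ` P" "finite H"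
      then obtain G where G: "G \<subseteq> P" "finite G" "H = move ` G"
        by (meson finite_subset_image)
      have "N \<noteq> {}" using N(2) by auto
      with ex_conj_formula_set[OF G(2) this, of C "Suc n"] obtain q u where
        q: "wf C q" "\<forall>i. u i \<in> N" "\<forall>xs. length xs = Suc n \<longrightarrow>
          (sat C (asg xs u) q \<longleftrightarrow> (\<forall>(p,w)\<in>G. sat C (asg xs w) p))"
        using G(1) P by blast
      then have "(Ex n q, u) \<in> ex_closure C N n P"
        unfolding ex_closure_def using G(1,2) by auto
      then have "sat C (asg ys u) (Ex n q)" using ys(3) by blast
      then obtain c where c: "c \<in> dom C" "sat C (asg (ys @ [c]) u) q"
        using asg_append_last[OF ys(1)] by auto
      then have "sat C (asg (ys @ [c]) w) p" if "(p,w) \<in> G" for p w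
        using q(3)[rule_format, of "ys @ [c]"] ys(1) that by auto
      then show "\<exists>c\<in>dom C. \<forall>(p,w)\<in>H. sat C (asg [c] w) p"
        using c(1) G(3) by (intro bexI[of _ c]) (auto simp: move_def sat_move[unfolded One_nat_def])
    qed
  qed
  then show ?thesis by (force simp: move_def sat_move[unfolded One_nat_def])
qed

theorem compactness:
  assumes satd: "saturated C (cardSuc (card_of N))" and es: "elem_sub C N"
    and P: "\<forall>(p,w)\<in>P. wf C p \<and> (\<forall>i. w i \<in> N)"
    and fin: "finitely_realized C n P"
  shows "realized C n P"
proof (cases "finite N")
  case True
  \<comment> \<open>saturation over card_of N cannot absorb new parameters, but C itself is finite\<close>
  then have "finite (dom C)"
    using dom_subset_if_finite_elem_sub[OF es] finite_subset by blast
  then show ?thesis using realized_if_finite_dom fin by blast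
next
  case False
  have "N \<subseteq> dom C" using es unfolding elem_sub_def by auto
  show ?thesis
    using P fin
  proof (induction n arbitrary: P)
    case 0
    then have "sat C (asg [] w) p" if "(p,w) \<in> P" for p w
      using that unfolding finitely_realized_def realized_def
      by (auto dest!: spec[of _ "{(p,w)}"])
    then show ?case unfolding realized_def by auto
  next
    case (Suc n)
    have "\<forall>(p,w)\<in>ex_closure C N n P. wf C p \<and> (\<forall>i. w i \<in> N)"
      unfolding ex_closure_def by (auto simp: wf_def)
    then have "realized C n (ex_closure C N n P)"
      using Suc.IH finitely_realized_ex_closure[OF Suc.prems(2)] by blast
    then obtain ys where
      "length ys = n" "set ys \<subseteq> dom C" "\<forall>(p,w)\<in>ex_closure C N n P. sat C (asg ys w) p"
      unfolding realized_def by blast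
    with realized_append_if_ex_closure[OF satd \<open>N \<subseteq> dom C\<close> False Suc.prems(1)]
    obtain c where "c \<in> dom C" "\<forall>(p,w)\<in>P. sat C (asg (ys @ [c]) w) p"
      by blast
    with \<open>length ys = n\<close> \<open>set ys \<subseteq> dom C\<close> show ?case
      unfolding realized_def by (intro exI[of _ "ys @ [c]"]) auto
  qed
qed

section \<open>Coheirs and weak orthogonality\<close>

lemma tp_mem: "(p,u) \<in> snd (tp C A xs) \<longleftrightarrow> wf C p \<and> (\<forall>i. u i \<in> A) \<and> sat C (asg xs u) p"
  by (simp add: tp_def)

lemma tp_eq_if_sat_tp:
  assumes "length ys = length xs" "\<forall>(p,u)\<in>snd (tp C A xs). sat C (asg ys u) p"
  shows "tp C A ys = tp C A xs"
proof -
  have "sat C (asg ys u) p \<longleftrightarrow> sat C (asg xs u) p" if "wf C p" "\<forall>i. u i \<in> A" for p u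
  proof
    assume "sat C (asg xs u) p"
    then show "sat C (asg ys u) p" using assms(2) that by (auto simp: tp_mem)
  next
    assume "sat C (asg ys u) p"
    moreover have "(Neg p, u) \<in> snd (tp C A xs)" if "\<not> sat C (asg xs u) p"
      using that \<open>wf C p\<close> \<open>\<forall>i. u i \<in> A\<close> by (simp add: tp_mem wf_def)
    ultimately show "sat C (asg xs u) p" using assms(2) by fastforce
  qed
  then show ?thesis using assms(1) unfolding tp_def by auto
qed

lemma tp_conj_closed:
  assumes "finite G" "G \<subseteq> snd (tp C A xs)" "A \<noteq> {}"
  shows "\<exists>p u. (p,u) \<in> snd (tp C A xs) \<and> (\<forall>a. length a = length xs \<longrightarrow> sat C (asg a u) p \<longrightarrow>
     (\<forall>(p',u')\<in>G. sat C (asg a u') p'))"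
proof -
  have "\<forall>(p,w)\<in>G. wf C p \<and> (\<forall>i. w i \<in> A)" using assms(2) by (auto simp: tp_mem)
  from ex_conj_formula_set[OF assms(1,3) this, of "length xs"] obtain p u where
    pu: "wf C p" "\<forall>i. u i \<in> A"
      "\<forall>ys. length ys = length xs \<longrightarrow> (sat C (asg ys u) p \<longleftrightarrow> (\<forall>(p',w')\<in>G. sat C (asg ys w') p'))"
    by blast
  then have "sat C (asg xs u) p" using assms(2) by (auto simp: tp_mem)
  with pu show ?thesis by (intro exI[of _ p] exI[of _ u]) (auto simp: tp_mem)
qed

definition fin_sat_in :: "('f,'r,'a) struc \<Rightarrow> 'a set \<Rightarrow> 'a set \<Rightarrow> 'a list \<Rightarrow> bool" where
  "fin_sat_in C N M d \<longleftrightarrow> (\<forall>\<chi> v. wf C \<chi> \<and> (\<forall>i. v i \<in> N) \<and> sat C (asg d v) \<chi> \<longrightarrow>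
     (\<exists>e. length e = length d \<and> set e \<subseteq> M \<and> sat C (asg e v) \<chi>))"

lemma shift_asg_in: "set b \<subseteq> A \<Longrightarrow> \<forall>i. u i \<in> A \<Longrightarrow> shift_asg m b u i \<in> A"
  by (auto simp: shift_asg_def)

lemma nonsplit_if_fin_sat_in:
  assumes fs: "fin_sat_in C N M d" and "M \<noteq> {}"
  shows "nonsplit C N M (tp C N d)"
  unfolding nonsplit_def
proof (intro allI impI, elim conjE)
  fix p k' b c u
  let ?k = "length d"
  assume "wf C p" and fv: "fv p \<subseteq> {..<fst (tp C N d) + k'}"
    and "length b = k'" "length c = k'" "set b \<subseteq> N" "set c \<subseteq> N" "\<forall>i. u i \<in> N"
    and "(p, shift_asg (fst (tp C N d)) b u) \<in> snd (tp C N d)"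
    and "(Neg p, shift_asg (fst (tp C N d)) c u) \<in> snd (tp C N d)"
  then have b: "sat C (asg d (shift_asg ?k b u)) p" and c: "\<not> sat C (asg d (shift_asg ?k c u)) p"
    by (simp_all add: tp_def)
  have "\<forall>i. shift_asg ?k b u i \<in> N" "\<forall>i. shift_asg ?k c u i \<in> N"
    using \<open>set b \<subseteq> N\<close> \<open>set c \<subseteq> N\<close> \<open>\<forall>i. u i \<in> N\<close> by (auto intro: shift_asg_in)
  moreover have "wf C (Neg p)" using \<open>wf C p\<close> by (simp add: wf_def)
  ultimately obtain \<chi> v where "wf C \<chi>" "\<forall>i. v i \<in> N" and \<chi>: "\<forall>e. length e = ?k \<longrightarrow>
      (sat C (asg e v) \<chi> \<longleftrightarrow> sat C (asg e (shift_asg ?k b u)) p \<and> sat C (asg e (shift_asg ?k c u)) (Neg p))"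
    using ex_conj_formula[OF \<open>wf C p\<close>, of "Neg p"] by blast
  moreover have "sat C (asg d v) \<chi>" using \<chi> b c by simp
  ultimately obtain e where e: "length e = ?k" "set e \<subseteq> M" "sat C (asg e v) \<chi>"
    using fs unfolding fin_sat_in_def by blast
  obtain m0 where "m0 \<in> M" using \<open>M \<noteq> {}\<close> by blast
  define U where "U = prefix_par e k' (\<lambda>_. m0)"
  \<comment> \<open>p only reads the variables below ?k + k', so the parameters u can be dropped\<close>
  have swap: "sat C (asg z U) (ren (block_swap ?k k') p) = sat C (asg (e @ z) u) p"
    if "length z = k'" for z
  proof -
    have "sat C (asg (e @ z) u) p = sat C (asg (e @ z) (\<lambda>_. m0)) p"
      by (rule sat_cong) (use fv that e(1) in \<open>auto simp: asg_def tp_def\<close>)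
    then show ?thesis using sat_prefix_par[OF that, of C e "\<lambda>_. m0" p] e(1) by (simp add: U_def)
  qed
  have "\<forall>i. U i \<in> M" unfolding U_def using e(2) \<open>m0 \<in> M\<close> by (auto intro: prefix_par_in)
  moreover have "sat C (asg (e @ b) u) p" "\<not> sat C (asg (e @ c) u) p"
    using \<chi> e by (auto simp: asg_shift_asg)
  ultimately have "(ren (block_swap ?k k') p, U) \<in> snd (tp C M b)"
    "(ren (block_swap ?k k') p, U) \<notin> snd (tp C M c)"
    using swap \<open>length b = k'\<close> \<open>length c = k'\<close> \<open>wf C p\<close> by (auto simp: tp_mem wf_ren)
  then show "tp C M b \<noteq> tp C M c" by auto
qed

lemma ex_limit_of_filter_base:
  fixes B :: "'i \<Rightarrow> 'a list set"
  assumes satd: "saturated C (cardSuc (card_of N))" and es: "elem_sub C N"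
    and B: "\<forall>i\<in>I. B i \<noteq> {} \<and> (\<forall>e\<in>B i. length e = k \<and> set e \<subseteq> dom C)"
    and directed: "\<forall>J\<subseteq>I. finite J \<longrightarrow> (\<exists>i\<in>I. \<forall>j\<in>J. B i \<subseteq> B j)"
  shows "\<exists>d. length d = k \<and> set d \<subseteq> dom C \<and> (\<forall>\<chi> v. wf C \<chi> \<and> (\<forall>i. v i \<in> N) \<and>
     sat C (asg d v) \<chi> \<longrightarrow> (\<forall>i\<in>I. \<exists>e\<in>B i. sat C (asg e v) \<chi>))"
proof -
  define avoid where "avoid i = {(Neg \<chi>, v) | \<chi> v. wf C \<chi> \<and> (\<forall>j. v j \<in> N) \<and>
      (\<forall>e\<in>B i. \<not> sat C (asg e v) \<chi>)}" for i
  have "realized C k (\<Union>i\<in>I. avoid i)"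
  proof (rule compactness[OF satd es])
    show "\<forall>(p,w)\<in>\<Union>i\<in>I. avoid i. wf C p \<and> (\<forall>i. w i \<in> N)"
      unfolding avoid_def by (auto simp: wf_def)
    show "finitely_realized C k (\<Union>i\<in>I. avoid i)"
      unfolding finitely_realized_def
    proof (intro allI impI)
      fix G assume "G \<subseteq> (\<Union>i\<in>I. avoid i)" "finite G"
      then obtain J where J: "J \<subseteq> I" "finite J" "G \<subseteq> (\<Union>j\<in>J. avoid j)"
        using finite_subset_UN by metis
      then obtain i where "i \<in> I" "\<forall>j\<in>J. B i \<subseteq> B j" using directed by blast
      then obtain e where "e \<in> B i" "length e = k" "set e \<subseteq> dom C" using B by blast
      then have "\<forall>(p,w)\<in>avoid j. sat C (asg e w) p" if "j \<in> J" for j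
        using that \<open>\<forall>j\<in>J. B i \<subseteq> B j\<close> \<open>e \<in> B i\<close> unfolding avoid_def by fastforce
      then show "realized C k G"
        unfolding realized_def using J(3) \<open>length e = k\<close> \<open>set e \<subseteq> dom C\<close> by blast
    qed
  qed
  then obtain d where d: "length d = k" "set d \<subseteq> dom C"
      "\<forall>(p,w)\<in>\<Union>i\<in>I. avoid i. sat C (asg d w) p"
    unfolding realized_def by blast
  have "\<exists>e\<in>B i. sat C (asg e v) \<chi>"
    if "wf C \<chi>" "\<forall>i. v i \<in> N" "sat C (asg d v) \<chi>" "i \<in> I" for \<chi> v i
  proof (rule ccontr)
    assume "\<not> ?thesis"
    then have "(Neg \<chi>, v) \<in> avoid i" using that(1,2) unfolding avoid_def by blast
    with d(3) that(4) have "sat C (asg d v) (Neg \<chi>)" by fastforce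
    with that(3) show False by simp
  qed
  with d(1,2) show ?thesis by blast
qed

definition open_gap ::
    "nat \<Rightarrow> nat \<Rightarrow> ('f,'r) fm \<times> (nat \<Rightarrow> 'a) \<Rightarrow> ('f,'r) fm \<times> (nat \<Rightarrow> 'a)" where
  "open_gap m k = (\<lambda>(p,u). (ren (ren_gap m k) p, par_gap m k u))"

lemma sat_open_gap:
  assumes "length a = m" "length e = k" "open_gap m k (p,u) = (p',u')"
  shows "sat C (asg (a @ e @ f) u') p' = sat C (asg (a @ f) u) p"
  using assms(3) sat_insert_block[OF assms(1,2)] by (auto simp: open_gap_def)

lemma finitely_realized_joint:
  fixes C :: "('f,'r,'a) struc"
  assumes "A \<noteq> {}"
    and approx: "\<forall>(p,u)\<in>snd (tp C A a). \<forall>(\<chi>,v)\<in>snd (tp C A d). \<exists>a' d'.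
      length a' = length a \<and> set a' \<subseteq> dom C \<and> length d' = length d \<and> set d' \<subseteq> dom C \<and>
      sat C (asg a' u) p \<and> sat C (asg d' v) \<chi> \<and> sat C (asg (a' @ d') w) \<psi>"
  shows "finitely_realized C (length a + length d) (open_gap (length a) (length d) ` snd (tp C A a)
    \<union> open_gap 0 (length a) ` snd (tp C A d) \<union> {(\<psi>, w)})"
  unfolding finitely_realized_def
proof (intro allI impI)
  let ?left = "open_gap (length a) (length d)" and ?right = "open_gap 0 (length a)"
  fix G assume G: "G \<subseteq> ?left ` snd (tp C A a) \<union> ?right ` snd (tp C A d) \<union> {(\<psi>, w)}" "finite G"
  have fin: "finite (G \<inter> ?left ` snd (tp C A a))" "finite (G \<inter> ?right ` snd (tp C A d))"
    using G(2) by simp_all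
  from finite_subset_image[OF fin(1) Int_lower2] obtain G1 where G1:
      "G1 \<subseteq> snd (tp C A a)" "finite G1" "G \<inter> ?left ` snd (tp C A a) = ?left ` G1"
    by blast
  from finite_subset_image[OF fin(2) Int_lower2] obtain G2 where G2:
      "G2 \<subseteq> snd (tp C A d)" "finite G2" "G \<inter> ?right ` snd (tp C A d) = ?right ` G2"
    by blast
  obtain p u where pu: "(p,u) \<in> snd (tp C A a)"
      "\<forall>a'. length a' = length a \<longrightarrow> sat C (asg a' u) p \<longrightarrow> (\<forall>(p',u')\<in>G1. sat C (asg a' u') p')"
    using tp_conj_closed[OF G1(2,1) \<open>A \<noteq> {}\<close>] by blast
  obtain \<chi> v where \<chi>v: "(\<chi>,v) \<in> snd (tp C A d)"
      "\<forall>d'. length d' = length d \<longrightarrow> sat C (asg d' v) \<chi> \<longrightarrow> (\<forall>(p',v')\<in>G2. sat C (asg d' v') p')"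
    using tp_conj_closed[OF G2(2,1) \<open>A \<noteq> {}\<close>] by blast
  obtain a' d' where a'd': "length a' = length a" "set a' \<subseteq> dom C"
      "length d' = length d" "set d' \<subseteq> dom C"
      "sat C (asg a' u) p" "sat C (asg d' v) \<chi>" "sat C (asg (a' @ d') w) \<psi>"
    using bspec[OF bspec[OF approx pu(1), unfolded case_prod_conv] \<chi>v(1), unfolded case_prod_conv]
    by blast
  have "sat C (asg (a' @ d') u') p'" if "(p',u') \<in> G" for p' u'
  proof -
    have "(p',u') \<in> G \<inter> ?left ` snd (tp C A a) \<or> (p',u') \<in> G \<inter> ?right ` snd (tp C A d) \<or>
        (p',u') = (\<psi>, w)"
      using that G(1) by blast
    then consider "(p',u') \<in> ?left ` G1" | "(p',u') \<in> ?right ` G2" | "(p',u') = (\<psi>, w)"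
      unfolding G1(3) G2(3) by blast
    then show ?thesis
    proof cases
      case 1
      then obtain q y where "(q,y) \<in> G1" "?left (q,y) = (p',u')" by auto
      moreover have "sat C (asg a' y) q" using pu(2) a'd'(1,5) \<open>(q,y) \<in> G1\<close> by blast
      ultimately show ?thesis using sat_open_gap[OF a'd'(1,3), of q y p' u' C "[]"] by simp
    next
      case 2
      then obtain q y where "(q,y) \<in> G2" "?right (q,y) = (p',u')" by auto
      moreover have "sat C (asg d' y) q" using \<chi>v(2) a'd'(3,6) \<open>(q,y) \<in> G2\<close> by blast
      ultimately show ?thesis using sat_open_gap[of "[]" 0 a' "length a" q y p' u' C d'] a'd'(1)
        by simp
    next
      case 3
      then show ?thesis using a'd'(7) by simp
    qed
  qed
  then show "realized C (length a + length d) G"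
    unfolding realized_def using a'd'(1-4) by (intro exI[of _ "a' @ d'"]) auto
qed

lemma ex_joint_realization:
  fixes C :: "('f,'r,'a) struc"
  assumes satd: "saturated C (cardSuc (card_of N))" and es: "elem_sub C N"
    and "wf C \<psi>" "\<forall>i. w i \<in> N"
    and approx: "\<forall>(p,u)\<in>snd (tp C N a). \<forall>(\<chi>,v)\<in>snd (tp C N d). \<exists>a' d'.
      length a' = length a \<and> set a' \<subseteq> dom C \<and> length d' = length d \<and> set d' \<subseteq> dom C \<and>
      sat C (asg a' u) p \<and> sat C (asg d' v) \<chi> \<and> sat C (asg (a' @ d') w) \<psi>"
  shows "\<exists>a' d'. realizes C N a' (tp C N a) \<and> realizes C N d' (tp C N d) \<and>
    sat C (asg (a' @ d') w) \<psi>"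
proof -
  let ?left = "open_gap (length a) (length d)" and ?right = "open_gap 0 (length a)"
  let ?P = "?left ` snd (tp C N a) \<union> ?right ` snd (tp C N d) \<union> {(\<psi>, w)}"
  have "realized C (length a + length d) ?P"
  proof (rule compactness[OF satd es])
    have "wf C (ren s p) \<and> (\<forall>i. par_gap j l u i \<in> N)"
      if "(p,u) \<in> snd (tp C N a) \<union> snd (tp C N d)" for s j l p u
      using that by (auto simp: tp_mem wf_ren intro: par_gap_in)
    then show "\<forall>(p,u)\<in>?P. wf C p \<and> (\<forall>i. u i \<in> N)"
      using assms(3,4) unfolding open_gap_def by force
    show "finitely_realized C (length a + length d) ?P"
      using finitely_realized_joint[OF _ approx] es by (simp add: elem_sub_def)
  qed
  then obtain z where z: "length z = length a + length d" "set z \<subseteq> dom C"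
      "\<forall>(p,u)\<in>?P. sat C (asg z u) p"
    unfolding realized_def by blast
  define a' where "a' = take (length a) z"
  define d' where "d' = drop (length a) z"
  have a'd': "z = a' @ d'" "length a' = length a" "length d' = length d"
      "set a' \<subseteq> dom C" "set d' \<subseteq> dom C"
    using z(1,2) unfolding a'_def d'_def by (auto dest: in_set_takeD in_set_dropD)
  have "tp C N a' = tp C N a"
  proof (rule tp_eq_if_sat_tp)
    have "sat C (asg z u') p'" if "(p,u) \<in> snd (tp C N a)" "?left (p,u) = (p',u')" for p u p' u'
      using that z(3) by force
    then show "\<forall>(p,u)\<in>snd (tp C N a). sat C (asg a' u) p"
      using sat_open_gap[OF a'd'(2,3), of _ _ _ _ C "[]"] a'd'(1) by (fastforce split: prod.splits)
  qed (rule a'd'(2))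
  moreover have "tp C N d' = tp C N d"
  proof (rule tp_eq_if_sat_tp)
    have "sat C (asg z v') p'" if "(p,v) \<in> snd (tp C N d)" "?right (p,v) = (p',v')" for p v p' v'
      using that z(3) by force
    then show "\<forall>(p,v)\<in>snd (tp C N d). sat C (asg d' v) p"
      using sat_open_gap[of "[]" 0 a' "length a" _ _ _ _ C d'] a'd'(1,2)
      by (fastforce split: prod.splits)
  qed (rule a'd'(3))
  moreover have "sat C (asg (a' @ d') w) \<psi>" using z(3) a'd'(1) by blast
  ultimately show ?thesis unfolding realizes_def using a'd'(4,5) by blast
qed

lemma weakly_orth_decides:
  assumes satd: "saturated C (cardSuc (card_of N))" and es: "elem_sub C N"
    and wo: "weakly_orth C N (tp C N a) (tp C N d)"
    and "set a \<subseteq> dom C" "set d \<subseteq> dom C" and \<phi>: "wf C \<phi>" "\<forall>i. w i \<in> N"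
  shows "\<exists>p u \<chi> v. (p,u) \<in> snd (tp C N a) \<and> (\<chi>,v) \<in> snd (tp C N d) \<and>
    (\<forall>a' d'. length a' = length a \<and> set a' \<subseteq> dom C \<and> length d' = length d \<and> set d' \<subseteq> dom C \<and>
       sat C (asg a' u) p \<and> sat C (asg d' v) \<chi> \<longrightarrow>
       sat C (asg (a' @ d') w) \<phi> = sat C (asg (a @ d) w) \<phi>)"
proof (rule ccontr)
  assume "\<not> ?thesis"
  define t where "t = sat C (asg (a @ d) w) \<phi>"
  define \<psi> where "\<psi> = (if t then Neg \<phi> else \<phi>)"
  have sat_\<psi>: "sat C x \<psi> \<longleftrightarrow> sat C x \<phi> \<noteq> t" for x by (simp add: \<psi>_def)
  have "wf C \<psi>" using \<phi>(1) by (simp add: \<psi>_def wf_def)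
  moreover from \<open>\<not> ?thesis\<close> have "\<forall>(p,u)\<in>snd (tp C N a). \<forall>(\<chi>,v)\<in>snd (tp C N d). \<exists>a' d'.
      length a' = length a \<and> set a' \<subseteq> dom C \<and> length d' = length d \<and> set d' \<subseteq> dom C \<and>
      sat C (asg a' u) p \<and> sat C (asg d' v) \<chi> \<and> sat C (asg (a' @ d') w) \<psi>"
    unfolding sat_\<psi> t_def by blast
  ultimately obtain a' d' where "realizes C N a' (tp C N a)" "realizes C N d' (tp C N d)"
      and "sat C (asg (a' @ d') w) \<psi>"
    using ex_joint_realization[OF satd es _ \<phi>(2)] by blast
  moreover have "realizes C N a (tp C N a)" "realizes C N d (tp C N d)"
    using \<open>set a \<subseteq> dom C\<close> \<open>set d \<subseteq> dom C\<close> by (simp_all add: realizes_def)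
  ultimately have "tp C N (a' @ d') = tp C N (a @ d)" and "sat C (asg (a' @ d') w) \<phi> \<noteq> t"
    using wo sat_\<psi> unfolding weakly_orth_def by blast+
  then show False using \<phi> unfolding t_def tp_def by auto
qed

lemma ex_weakly_orth_limit:
  fixes B :: "'i \<Rightarrow> 'a list set"
  assumes satd: "saturated C (cardSuc (card_of N))" and es: "elem_sub C N"
    and q: "q \<in> Snsp_ge C N \<kappa> m"
    and M: "M \<subseteq> N" "M \<noteq> {}" "card_lt M \<kappa>"
    and B: "I \<noteq> {}" "\<forall>i\<in>I. B i \<noteq> {} \<and> (\<forall>e\<in>B i. length e = k \<and> set e \<subseteq> M)"
    and directed: "\<forall>J\<subseteq>I. finite J \<longrightarrow> (\<exists>i\<in>I. \<forall>j\<in>J. B i \<subseteq> B j)"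
  shows "\<exists>d. length d = k \<and> set d \<subseteq> dom C \<and> weakly_orth C N q (tp C N d) \<and>
    (\<forall>\<chi> v. wf C \<chi> \<and> (\<forall>i. v i \<in> N) \<and> sat C (asg d v) \<chi> \<longrightarrow> (\<forall>i\<in>I. \<exists>e\<in>B i. sat C (asg e v) \<chi>))"
proof -
  have "M \<subseteq> dom C" using M(1) es by (auto simp: elem_sub_def)
  with B(2) have "\<forall>i\<in>I. B i \<noteq> {} \<and> (\<forall>e\<in>B i. length e = k \<and> set e \<subseteq> dom C)" by blast
  from ex_limit_of_filter_base[OF satd es this directed] obtain d where
    d: "length d = k" "set d \<subseteq> dom C" and
    limit: "\<forall>\<chi> v. wf C \<chi> \<and> (\<forall>i. v i \<in> N) \<and> sat C (asg d v) \<chi> \<longrightarrow>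
      (\<forall>i\<in>I. \<exists>e\<in>B i. sat C (asg e v) \<chi>)"
    by blast
  have "fin_sat_in C N M d"
    unfolding fin_sat_in_def
  proof (intro allI impI)
    fix \<chi> v assume "wf C \<chi> \<and> (\<forall>i. v i \<in> N) \<and> sat C (asg d v) \<chi>"
    moreover obtain i where "i \<in> I" using B(1) by blast
    ultimately obtain e where "e \<in> B i" "sat C (asg e v) \<chi>" using limit by blast
    then show "\<exists>e. length e = length d \<and> set e \<subseteq> M \<and> sat C (asg e v) \<chi>"
      using B(2) \<open>i \<in> I\<close> d(1) by blast
  qed
  then have "tp C N d \<in> Snsp_lt C N \<kappa>"
    using nonsplit_if_fin_sat_in M d unfolding Snsp_lt_def Stypes_def by blast
  then have "weakly_orth C N q (tp C N d)"
    using q unfolding Snsp_ge_def by blast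
  with d limit show ?thesis by blast
qed

lemma Snsp_ge_formula_decides_over_small_set:
  assumes satd: "saturated C (cardSuc (card_of N))" and es: "elem_sub C N"
    and q: "tp C N a0 \<in> Snsp_ge C N \<kappa> (length a0)" "set a0 \<subseteq> dom C"
    and M: "M \<subseteq> N" "M \<noteq> {}" "card_lt M \<kappa>"
    and \<phi>: "wf C \<phi>" "\<forall>i. w i \<in> N"
  shows "\<exists>p u. (p,u) \<in> snd (tp C N a0) \<and>
    (\<forall>a b. length a = length a0 \<and> set a \<subseteq> dom C \<and> sat C (asg a u) p \<and>
       length b = k \<and> set b \<subseteq> M \<longrightarrow> sat C (asg (a @ b) w) \<phi> = sat C (asg (a0 @ b) w) \<phi>)"
proof (rule ccontr)
  assume none: "\<not> ?thesis"
  have "N \<noteq> {}" "M \<subseteq> dom C" using es M(1) by (auto simp: elem_sub_def)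
  define bad where "bad = (\<lambda>(p,u). {b. length b = k \<and> set b \<subseteq> M \<and>
    (\<exists>a. length a = length a0 \<and> set a \<subseteq> dom C \<and> sat C (asg a u) p \<and>
       sat C (asg (a @ b) w) \<phi> \<noteq> sat C (asg (a0 @ b) w) \<phi>)})"
  have nonempty: "snd (tp C N a0) \<noteq> {}"
    using tp_conj_closed[OF finite.emptyI empty_subsetI \<open>N \<noteq> {}\<close>] by blast
  have bad_sets: "\<forall>g\<in>snd (tp C N a0). bad g \<noteq> {} \<and> (\<forall>e\<in>bad g. length e = k \<and> set e \<subseteq> M)"
    using none unfolding bad_def by fastforce
  have directed: "\<forall>J\<subseteq>snd (tp C N a0). finite J \<longrightarrow> (\<exists>g\<in>snd (tp C N a0). \<forall>j\<in>J. bad g \<subseteq> bad j)"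
  proof (intro allI impI)
    fix J assume "J \<subseteq> snd (tp C N a0)" "finite J"
    from tp_conj_closed[OF this(2,1) \<open>N \<noteq> {}\<close>] obtain p u where "(p,u) \<in> snd (tp C N a0)"
      and implies: "\<forall>a. length a = length a0 \<longrightarrow> sat C (asg a u) p \<longrightarrow> (\<forall>(p',u')\<in>J. sat C (asg a u') p')"
      by blast
    have "bad (p,u) \<subseteq> bad (p',u')" if "(p',u') \<in> J" for p' u'
      using implies that unfolding bad_def by blast
    with \<open>(p,u) \<in> snd (tp C N a0)\<close> show "\<exists>g\<in>snd (tp C N a0). \<forall>j\<in>J. bad g \<subseteq> bad j"
      by fast
  qed
  from ex_weakly_orth_limit[OF satd es q(1) M nonempty bad_sets directed]
  obtain d where d: "length d = k" "set d \<subseteq> dom C"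
    and wo: "weakly_orth C N (tp C N a0) (tp C N d)"
    and limit: "\<forall>\<chi> v. wf C \<chi> \<and> (\<forall>i. v i \<in> N) \<and> sat C (asg d v) \<chi> \<longrightarrow>
      (\<forall>g\<in>snd (tp C N a0). \<exists>e\<in>bad g. sat C (asg e v) \<chi>)"
    by blast
  from weakly_orth_decides[OF satd es wo q(2) d(2) \<phi>] obtain p u \<chi> v where
    "(p,u) \<in> snd (tp C N a0)" "(\<chi>,v) \<in> snd (tp C N d)" and decides:
    "\<forall>a' d'. length a' = length a0 \<and> set a' \<subseteq> dom C \<and> length d' = length d \<and> set d' \<subseteq> dom C \<and>
       sat C (asg a' u) p \<and> sat C (asg d' v) \<chi> \<longrightarrow>
       sat C (asg (a' @ d') w) \<phi> = sat C (asg (a0 @ d) w) \<phi>"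
    by blast
  moreover have "wf C \<chi> \<and> (\<forall>i. v i \<in> N) \<and> sat C (asg d v) \<chi>"
    using \<open>(\<chi>,v) \<in> snd (tp C N d)\<close> by (simp add: tp_mem)
  ultimately obtain e where "e \<in> bad (p,u)" "sat C (asg e v) \<chi>"
    using limit by blast
  then obtain a where "length a = length a0" "set a \<subseteq> dom C" "sat C (asg a u) p"
    "sat C (asg (a @ e) w) \<phi> \<noteq> sat C (asg (a0 @ e) w) \<phi>" "length e = k" "set e \<subseteq> dom C"
    using \<open>M \<subseteq> dom C\<close> unfolding bad_def by auto
  moreover have "sat C (asg a0 u) p" using \<open>(p,u) \<in> snd (tp C N a0)\<close> by (simp add: tp_mem)
  ultimately show False using decides \<open>sat C (asg e v) \<chi>\<close> q(2) d(1) by metis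
qed

theorem claim1p11:
  fixes C :: "('f,'r,'a) struc" and N :: "'a set" and \<kappa> :: "'k rel"
    and q :: "nat \<times> (('f,'r) fm \<times> (nat \<Rightarrow> 'a)) set" and m :: nat
  assumes "struct C"
    and "NIP C"
    and "Card_order \<kappa>" and "regularCard \<kappa>"
    and "card_lt {\<phi>. wf C \<phi>} \<kappa>"
    and "elem_sub C N"
    and "saturated C (cardSuc (card_of N))"
    and "ksaturated C N \<kappa>"
    and "q \<in> Snsp_ge C N \<kappa> m"
  shows "\<forall>M \<phi> k w. elem_sub (restr C N) M \<and> card_lt M \<kappa> \<and>
            wf C \<phi> \<and> (\<forall>i. w i \<in> N) \<longrightarrow>
          (\<exists>\<psi> w' . (\<psi>, w') \<in> snd q \<and>
            (\<exists>\<eta> :: 'a list \<Rightarrow> bool.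
               \<forall>a. length a = m \<and> set a \<subseteq> dom C \<and> sat C (asg a w') \<psi> \<longrightarrow>
                 (\<forall>b. length b = k \<and> set b \<subseteq> M \<longrightarrow>
                    (sat C (asg a (shift_asg m b w)) \<phi> \<longleftrightarrow> \<eta> b))))"
proof (intro allI impI, elim conjE)
  fix M :: "'a set" and \<phi> :: "('f,'r) fm" and k :: nat and w :: "nat \<Rightarrow> 'a"
  assume "elem_sub (restr C N) M" "card_lt M \<kappa>" "wf C \<phi>" "\<forall>i. w i \<in> N"
  moreover obtain a0 where "q = tp C N a0" "length a0 = m" "set a0 \<subseteq> dom C"
    using assms(9) unfolding Snsp_ge_def Stypes_def by auto
  moreover have "M \<subseteq> N" "M \<noteq> {}"
    using \<open>elem_sub (restr C N) M\<close> unfolding elem_sub_def by (auto simp: restr_def)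
  ultimately obtain p u where "(p,u) \<in> snd q" and decides:
    "\<forall>a b. length a = m \<and> set a \<subseteq> dom C \<and> sat C (asg a u) p \<and> length b = k \<and> set b \<subseteq> M \<longrightarrow>
       sat C (asg (a @ b) w) \<phi> = sat C (asg (a0 @ b) w) \<phi>"
    using Snsp_ge_formula_decides_over_small_set[OF assms(7,6)] assms(9) by metis
  then show "\<exists>\<psi> w'. (\<psi>, w') \<in> snd q \<and> (\<exists>\<eta> :: 'a list \<Rightarrow> bool.
      \<forall>a. length a = m \<and> set a \<subseteq> dom C \<and> sat C (asg a w') \<psi> \<longrightarrow>
        (\<forall>b. length b = k \<and> set b \<subseteq> M \<longrightarrow> (sat C (asg a (shift_asg m b w)) \<phi> \<longleftrightarrow> \<eta> b)))"
    by (intro exI[of _ p] exI[of _ u] conjI exI[of _ "\<lambda>b. sat C (asg (a0 @ b) w) \<phi>"])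
      (auto simp: asg_shift_asg)
qed

end
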